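(* The pseudo-independence complex $\Delta(U)$ of every U-matroid $U$ is shellable.
   Context: A U-matroid is a triple $U=(E,\mathcal{D},\rho)$ with $E$ finite, $\mathcal{D}\subseteq2^E$ an accessible distributive lattice of sets, and $\rho:\mathcal{D}\to\mathbb{N}$ with $\rho(\emptyset)=0$, monotone, submodular, with unit increase. Its base polyhedron is $\mathcal{B}(U)=\{\mathbf{x}\in\mathbb{R}^E:\mathbf{x}(A)\le\rho(A)\ \forall A\in\mathcal{D},\ \mathbf{x}(E)=\rho(E)\}$; a basis of $U$ is the support of a vertex of $\mathcal{B}(U)$. The pseudo-independence complex $\Delta(U)$ is the simplicial complex on $E$ generated by the bases of $U$. *)

theory Defs
  imports Complex_Main "HOL-Library.FuncSet"
begin

definition accessible_distributive_lattice :: "'a set \<Rightarrow> 'a set set \<Rightarrow> bool" where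
  "accessible_distributive_lattice E D \<longleftrightarrow>
     D \<subseteq> Pow E \<and> {} \<in> D \<and> E \<in> D \<and>
     (\<forall>A\<in>D. \<forall>B\<in>D. A \<union> B \<in> D \<and> A \<inter> B \<in> D) \<and>
     (\<forall>A\<in>D. A \<noteq> {} \<longrightarrow> (\<exists>e\<in>A. A - {e} \<in> D))"

definition U_matroid :: "'a set \<Rightarrow> 'a set set \<Rightarrow> ('a set \<Rightarrow> nat) \<Rightarrow> bool" where
  "U_matroid E D \<rho> \<longleftrightarrow>
     finite E \<and> accessible_distributive_lattice E D \<and>
     \<rho> {} = 0 \<and>
     (\<forall>A\<in>D. \<forall>B\<in>D. A \<subseteq> B \<longrightarrow> \<rho> A \<le> \<rho> B) \<and>
     (\<forall>A\<in>D. \<forall>B\<in>D. \<rho> (A \<union> B) + \<rho> (A \<inter> B) \<le> \<rho> A + \<rho> B) \<and>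
     (\<forall>A\<in>D. \<forall>e. A \<union> {e} \<in> D \<longrightarrow> \<rho> (A \<union> {e}) \<le> \<rho> A + 1)"

definition base_polyhedron :: "'a set \<Rightarrow> 'a set set \<Rightarrow> ('a set \<Rightarrow> nat) \<Rightarrow> ('a \<Rightarrow> real) set" where
  "base_polyhedron E D \<rho> =
     {x \<in> extensional E. (\<forall>A\<in>D. (\<Sum>e\<in>A. x e) \<le> real (\<rho> A)) \<and> (\<Sum>e\<in>E. x e) = real (\<rho> E)}"

definition is_vertex :: "('a \<Rightarrow> real) set \<Rightarrow> ('a \<Rightarrow> real) \<Rightarrow> bool" where
  "is_vertex P x \<longleftrightarrow> x \<in> P \<and>
     \<not> (\<exists>y\<in>P. \<exists>z\<in>P. y \<noteq> z \<and> (\<exists>t::real. 0 < t \<and> t < 1 \<and> x = (\<lambda>e. t * y e + (1 - t) * z e)))"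

definition support :: "'a set \<Rightarrow> ('a \<Rightarrow> real) \<Rightarrow> 'a set" where
  "support E x = {e \<in> E. x e \<noteq> 0}"

definition U_bases :: "'a set \<Rightarrow> 'a set set \<Rightarrow> ('a set \<Rightarrow> nat) \<Rightarrow> 'a set set" where
  "U_bases E D \<rho> = {support E x | x. is_vertex (base_polyhedron E D \<rho>) x}"

definition generated_complex :: "'a set set \<Rightarrow> 'a set set" where
  "generated_complex Fs = {G. \<exists>F\<in>Fs. G \<subseteq> F}"

definition pseudo_independence_complex :: "'a set \<Rightarrow> 'a set set \<Rightarrow> ('a set \<Rightarrow> nat) \<Rightarrow> 'a set set" where
  "pseudo_independence_complex E D \<rho> = generated_complex (U_bases E D \<rho>)"

definition facets :: "'a set set \<Rightarrow> 'a set set" where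
  "facets K = {F \<in> K. \<forall>G\<in>K. F \<subseteq> G \<longrightarrow> G = F}"

text \<open>A complex is pure of dimension d if all facets have d+1 vertices
  (dimension d is encoded via the facet cardinality d+1 to allow d = -1).\<close>
definition pure_with_card :: "'a set set \<Rightarrow> nat \<Rightarrow> bool" where
  "pure_with_card K k \<longleftrightarrow> (\<forall>F\<in>facets K. card F = k)"

text \<open>Shellability (Bjoerner--Wachs, not necessarily pure): a linear order
  F_1,...,F_t of the facets such that for j \<ge> 2 the complex
  <F_j> \<inter> <F_1,...,F_{j-1}> is pure of dimension dim F_j - 1.\<close>
definition shelling_order :: "'a set set \<Rightarrow> 'a set list \<Rightarrow> bool" where
  "shelling_order K Fs \<longleftrightarrow> distinct Fs \<and> set Fs = facets K \<and>
     (\<forall>j. 0 < j \<and> j < length Fs \<longrightarrow>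
        pure_with_card (generated_complex {Fs ! j} \<inter> generated_complex {Fs ! i | i. i < j})
                       (card (Fs ! j) - 1))"

definition shellable :: "'a set set \<Rightarrow> bool" where
  "shellable K \<longleftrightarrow> (\<exists>Fs. shelling_order K Fs)"

end

(* The bases of U are exactly the sets of rank jumps along the maximal chains of D.  For a
   maximal chain, the 0/1 vector of its jumps lies in B(U) and is tight on every set of the chain,
   which determines it, so it is a vertex.  Conversely, the sets that are tight at a vertex x form
   a sublattice of D separating any two elements a, b of E (otherwise x + eps (e_a - e_b) and
   x - eps (e_a - e_b) both lie in B(U)); such a lattice is accessible, so it contains a maximal
   chain, and along it the coordinates of x are the 0/1 rank increments.

   Fix an enumeration of E and order the bases by the lexicographically least maximal chain
   producing them.  If B comes before B', their least chains, listed from the top, are U y V and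
   U L with y before the head of L.  Moving y to the front of L gives a maximal chain whose base
   B'' comes before B' and satisfies B'' Int B' = B' - {y} with y not in B, which is the exchange
   condition making this order a shelling. *)

theory Submission
  imports Defs "HOL-Library.List_Lexorder" "HOL-Library.Indicator_Function"
begin

section \<open>Chains encoded as lists\<close>

(* The suffix sets of a feasible list form a chain in F growing by one element at a time;
   the head of the list is the element added last. *)
fun feasible_list :: "'a set set \<Rightarrow> 'a list \<Rightarrow> bool" where
  "feasible_list F [] = True"
| "feasible_list F (e # l) \<longleftrightarrow> e \<notin> set l \<and> set (e # l) \<in> F \<and> feasible_list F l"

fun rank_jumps :: "('a set \<Rightarrow> nat) \<Rightarrow> 'a list \<Rightarrow> 'a set" where
  "rank_jumps r [] = {}"
| "rank_jumps r (e # l) =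
     (if r (set (e # l)) \<noteq> r (set l) then insert e (rank_jumps r l) else rank_jumps r l)"

lemma rank_jumps_subset: "rank_jumps r l \<subseteq> set l"
  by (induction l) auto

lemma finite_rank_jumps: "finite (rank_jumps r l)"
  by (rule finite_subset[OF rank_jumps_subset]) simp

lemma mem_rank_jumps_Cons:
  "x \<notin> set l \<Longrightarrow> x \<in> rank_jumps r (x # l) \<longleftrightarrow> r (insert x (set l)) \<noteq> r (set l)"
  using rank_jumps_subset[of r l] by auto

lemma rank_jumps_append_inter:
  "distinct (u @ l) \<Longrightarrow> set l \<inter> rank_jumps r (u @ l) = rank_jumps r l"
  using rank_jumps_subset[of r l] by (induction u) auto

lemma rank_jumps_append_diff_cong:
  "set l = set l' \<Longrightarrow> rank_jumps r (u @ l) - set l = rank_jumps r (u @ l') - set l'"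
  using rank_jumps_subset[of r l] rank_jumps_subset[of r l'] by (induction u) auto

lemma feasible_list_distinct: "feasible_list F l \<Longrightarrow> distinct l"
  by (induction l) auto

lemma feasible_list_appendD: "feasible_list F (u @ l) \<Longrightarrow> feasible_list F l"
  by (induction u) auto

lemma feasible_list_append_cong:
  "feasible_list F (u @ l) \<Longrightarrow> feasible_list F l' \<Longrightarrow> set l' = set l \<Longrightarrow> feasible_list F (u @ l')"
  by (induction u) auto

lemma feasible_list_mono: "feasible_list F l \<Longrightarrow> F \<subseteq> G \<Longrightarrow> feasible_list G l"
  by (induction l) auto

lemma set_feasible_list: "feasible_list F l \<Longrightarrow> {} \<in> F \<Longrightarrow> set l \<in> F"
  by (cases l) auto

lemma feasible_list_exists:
  assumes "{} \<in> T" and accessible: "\<And>A. A \<in> T \<Longrightarrow> A \<noteq> {} \<Longrightarrow> \<exists>e\<in>A. A - {e} \<in> T"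
    and "A \<in> T" "finite A"
  shows "\<exists>l. feasible_list T l \<and> set l = A"
  using assms(3,4)
proof (induction "card A" arbitrary: A rule: less_induct)
  case less
  show ?case
  proof (cases "A = {}")
    case True
    then show ?thesis by (intro exI[of _ "[]"]) simp
  next
    case False
    then obtain e where e: "e \<in> A" "A - {e} \<in> T" using accessible less.prems(1) by blast
    moreover have "card (A - {e}) < card A" using card_Diff1_less[OF less.prems(2) e(1)] .
    ultimately obtain l where l: "feasible_list T l" "set l = A - {e}"
      using less.hyps less.prems(2) by blast
    have "set (e # l) = A" using l(2) e(1) by auto
    then have "feasible_list T (e # l)" using l less.prems(1) by simp
    then show ?thesis using \<open>set (e # l) = A\<close> by blast
  qed
qed

lemma accessible_if_points_separated:
  assumes "finite T" "{} \<in> T"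
    and Un: "\<And>A B. A \<in> T \<Longrightarrow> B \<in> T \<Longrightarrow> A \<union> B \<in> T"
    and Int: "\<And>A B. A \<in> T \<Longrightarrow> B \<in> T \<Longrightarrow> A \<inter> B \<in> T"
    and separated: "\<And>a b. a \<in> \<Union>T \<Longrightarrow> a \<noteq> b \<Longrightarrow> \<exists>B\<in>T. (a \<in> B) \<noteq> (b \<in> B)"
    and A: "A \<in> T" "A \<noteq> {}"
  shows "\<exists>e\<in>A. A - {e} \<in> T"
proof -
  define C where "C = {B \<in> T. B \<subset> A}"
  have "finite C" "C \<noteq> {}" using assms(1,2) A by (auto simp: C_def)
  from finite_has_maximal[OF this] obtain A' where "A' \<in> C"
    and maximal: "\<And>B. B \<in> C \<Longrightarrow> A' \<subseteq> B \<Longrightarrow> A' = B"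
    by blast
  then have A': "A' \<in> T" "A' \<subset> A" by (auto simp: C_def)
  then obtain a where a: "a \<in> A - A'" by blast
  have "b = a" if b: "b \<in> A - A'" for b
  proof (rule ccontr)
    assume "b \<noteq> a"
    then obtain B where B: "B \<in> T" "(a \<in> B) \<noteq> (b \<in> B)"
      using separated[of b a] a b A(1) by blast
    define M where "M = (B \<inter> A) \<union> A'"
    have "M \<in> T" unfolding M_def using Un Int B(1) A(1) A'(1) by blast
    moreover have "A' \<subseteq> M" "M \<subseteq> A" using A'(2) by (auto simp: M_def)
    ultimately have "M = A \<or> M = A'" using maximal[of M] by (auto simp: C_def)
    then show False using a b B(2) by (auto simp: M_def)
  qed
  then have "A - {a} = A'" using a A'(2) by blast
  then show ?thesis using a A'(1) by auto
qed

lemma map_less_map_common_prefix: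
  fixes f :: "'a \<Rightarrow> 'b::linorder"
  assumes less: "map f xs < map f ys" and "length xs = length ys" and "inj_on f (set xs \<union> set ys)"
  obtains u a v b w where "xs = u @ a # v" "ys = u @ b # w" "f a < f b"
proof -
  have "(map f xs, map f ys) \<in> lexord {(a, b). a < b}"
    using less by (simp add: list_less_def)
  moreover have "map f ys \<noteq> map f xs @ c # r" for c r
  proof
    assume "map f ys = map f xs @ c # r"
    then have "length (map f ys) = length (map f xs @ c # r)" by (rule arg_cong)
    then show False using assms(2) by simp
  qed
  ultimately obtain u' a' v' b' w' where "a' < b'" "map f xs = u' @ a' # v'" "map f ys = u' @ b' # w'"
    unfolding lexord_def by blast
  then obtain u1 a v u2 b w where xs: "xs = u1 @ a # v" and ys: "ys = u2 @ b # w"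
    and "map f u1 = map f u2" "f a < f b"
    by (auto simp: map_eq_append_conv)
  moreover have "inj_on f (set u1 \<union> set u2)"
    using assms(3) by (rule inj_on_subset) (auto simp: xs ys)
  then have "u1 = u2" using \<open>map f u1 = map f u2\<close> inj_on_map_eq_map by blast
  ultimately show ?thesis using that by blast
qed

lemma append_Cons_less:
  fixes a b :: "'a::linorder"
  shows "a < b \<Longrightarrow> u @ a # v < u @ b # w"
  by (induction u) auto

section \<open>Vertices of polyhedra in R^E\<close>

lemma convex_combination_eq_upper_bound:
  fixes a b c t :: real
  assumes "a \<le> c" "b \<le> c" "0 < t" "t < 1" "t * a + (1 - t) * b = c"
  shows "a = c" "b = c"
proof -
  have "0 \<le> t * (c - a)" "0 \<le> (1 - t) * (c - b)" using assms by simp_all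
  moreover have "t * (c - a) + (1 - t) * (c - b) = 0" using assms(5) by (simp add: algebra_simps)
  ultimately have "t * (c - a) = 0" "(1 - t) * (c - b) = 0" by linarith+
  then show "a = c" "b = c" using assms(3,4) by simp_all
qed

lemma sum_restrict_indicator:
  assumes "finite A" "A \<subseteq> E"
  shows "sum (restrict (indicator S) E) A = real (card (A \<inter> S))"
proof -
  have "sum (restrict (indicator S) E) A = (sum (indicator S) A :: real)"
    using assms(2) by (intro sum.cong) auto
  then show ?thesis using assms(1) by (simp add: indicator_def)
qed

lemma eq_if_suffix_sums_eq:
  fixes x y :: "'a \<Rightarrow> real"
  assumes "x \<in> extensional E" "y \<in> extensional E" "distinct z" "set z = E"
    and suffix_sums: "\<And>u l. z = u @ l \<Longrightarrow> sum x (set l) = sum y (set l)"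
  shows "x = y"
proof
  fix e
  show "x e = y e"
  proof (cases "e \<in> E")
    case False
    then show ?thesis using assms(1,2) by (simp add: extensional_def)
  next
    case True
    then obtain u l where z: "z = u @ e # l" using assms(4) by (metis split_list)
    then have "e \<notin> set l" using assms(3) by simp
    moreover have "sum x (set l) = sum y (set l)" using suffix_sums[of "u @ [e]"] z by simp
    moreover have "sum x (set (e # l)) = sum y (set (e # l))" using suffix_sums z by blast
    ultimately show ?thesis by simp
  qed
qed

lemma not_vertex_if_symmetric_shift:
  assumes "x \<in> extensional E" "restrict (\<lambda>e. x e + c e) E \<in> P" "restrict (\<lambda>e. x e + - c e) E \<in> P"
    and "a \<in> E" "c a \<noteq> 0"
  shows "\<not> is_vertex P x"
proof -
  define y where "y = restrict (\<lambda>e. x e + c e) E"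
  define w where "w = restrict (\<lambda>e. x e + - c e) E"
  have "y \<noteq> w" using assms(4,5) by (auto simp: y_def w_def fun_eq_iff)
  moreover have "x = (\<lambda>e. (1/2) * y e + (1 - 1/2) * w e)"
  proof
    fix e
    show "x e = (1/2) * y e + (1 - 1/2) * w e"
    proof (cases "e \<in> E")
      case True
      then show ?thesis by (simp add: y_def w_def field_simps)
    next
      case False
      then have "x e = undefined" using assms(1) by (simp add: extensional_def)
      then show ?thesis using False by (simp add: y_def w_def)
    qed
  qed
  moreover have "y \<in> P" "w \<in> P" using assms(2,3) by (simp_all add: y_def w_def)
  moreover have "0 < (1/2::real)" "(1/2::real) < 1" by simp_all
  ultimately show ?thesis unfolding is_vertex_def by blast
qed

section \<open>A shelling criterion\<close>

lemma facets_generated_complex: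
  assumes antichain: "\<And>B B'. B \<in> Bs \<Longrightarrow> B' \<in> Bs \<Longrightarrow> B \<subseteq> B' \<Longrightarrow> B = B'"
  shows "facets (generated_complex Bs) = Bs"
proof
  show "facets (generated_complex Bs) \<subseteq> Bs"
  proof
    fix F assume F: "F \<in> facets (generated_complex Bs)"
    then obtain B where B: "B \<in> Bs" "F \<subseteq> B" by (auto simp: facets_def generated_complex_def)
    then have "B \<in> generated_complex Bs" by (auto simp: generated_complex_def)
    then have "B = F" using F B(2) by (simp add: facets_def)
    then show "F \<in> Bs" using B(1) by simp
  qed
  show "Bs \<subseteq> facets (generated_complex Bs)"
    using antichain by (auto simp: facets_def generated_complex_def)
qed

lemma shelling_order_if_exchange:
  assumes "distinct Fs" and finite: "\<And>F. F \<in> set Fs \<Longrightarrow> finite F"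
    and antichain: "\<And>F G. F \<in> set Fs \<Longrightarrow> G \<in> set Fs \<Longrightarrow> F \<subseteq> G \<Longrightarrow> F = G"
    and exchange: "\<And>i j. i < j \<Longrightarrow> j < length Fs \<Longrightarrow>
      \<exists>k<j. \<exists>y\<in>Fs ! j - Fs ! i. Fs ! k \<inter> Fs ! j = Fs ! j - {y}"
  shows "shelling_order (generated_complex (set Fs)) Fs"
proof -
  have "pure_with_card (generated_complex {Fs ! j} \<inter> generated_complex {Fs ! i | i. i < j})
      (card (Fs ! j) - 1)" if j: "j < length Fs" for j
    unfolding pure_with_card_def
  proof
    let ?C = "generated_complex {Fs ! j} \<inter> generated_complex {Fs ! i | i. i < j}"
    fix F assume "F \<in> facets ?C"
    then have "F \<in> ?C" and maximal: "\<And>G. G \<in> ?C \<Longrightarrow> F \<subseteq> G \<Longrightarrow> G = F"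
      by (auto simp: facets_def)
    then obtain i where i: "i < j" "F \<subseteq> Fs ! i" "F \<subseteq> Fs ! j"
      by (auto simp: generated_complex_def)
    then obtain k y where "k < j" and y: "y \<in> Fs ! j - Fs ! i"
      and "Fs ! k \<inter> Fs ! j = Fs ! j - {y}"
      using exchange j by blast
    then have "Fs ! j - {y} \<in> ?C" by (auto simp: generated_complex_def)
    moreover have "F \<subseteq> Fs ! j - {y}" using i y by blast
    ultimately have "F = Fs ! j - {y}" using maximal by blast
    moreover have "finite (Fs ! j)" using finite j by simp
    ultimately show "card F = card (Fs ! j) - 1" using y by simp
  qed
  then show ?thesis
    using assms(1) facets_generated_complex[of "set Fs"] antichain
    by (simp add: shelling_order_def)
qed

lemma shellable_if_key_exchange:
  fixes key :: "'a set \<Rightarrow> 'b::linorder"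
  assumes "finite Bs" "inj_on key Bs" "\<And>B. B \<in> Bs \<Longrightarrow> finite B"
    and antichain: "\<And>B B'. B \<in> Bs \<Longrightarrow> B' \<in> Bs \<Longrightarrow> B \<subseteq> B' \<Longrightarrow> B = B'"
    and exchange: "\<And>B B'. B \<in> Bs \<Longrightarrow> B' \<in> Bs \<Longrightarrow> key B < key B' \<Longrightarrow>
      \<exists>B''\<in>Bs. key B'' < key B' \<and> (\<exists>y\<in>B' - B. B'' \<inter> B' = B' - {y})"
  shows "shellable (generated_complex Bs)"
proof -
  obtain bs where "distinct bs" "set bs = Bs" using finite_distinct_list[OF assms(1)] by blast
  define Fs where "Fs = sort_key key bs"
  have Fs: "distinct Fs" "set Fs = Bs" using \<open>distinct bs\<close> \<open>set bs = Bs\<close> by (simp_all add: Fs_def)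
  have "sorted_wrt (<) (map key Fs)"
    using assms(2) Fs by (simp add: Fs_def strict_sorted_iff distinct_map)
  then have key_less_iff: "key (Fs ! i) < key (Fs ! j) \<longleftrightarrow> i < j"
    if "i < length Fs" "j < length Fs" for i j
    using that by (metis linorder_neqE_nat nth_map not_less_iff_gr_or_eq sorted_wrt_nth_less length_map)
  have "\<exists>k<j. \<exists>y\<in>Fs ! j - Fs ! i. Fs ! k \<inter> Fs ! j = Fs ! j - {y}"
    if "i < j" "j < length Fs" for i j
  proof -
    have "key (Fs ! i) < key (Fs ! j)" using key_less_iff that by simp
    moreover have "Fs ! i \<in> Bs" "Fs ! j \<in> Bs" using Fs(2) that by auto
    ultimately obtain B'' y where "B'' \<in> Bs" "key B'' < key (Fs ! j)" "y \<in> Fs ! j - Fs ! i"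
      "B'' \<inter> Fs ! j = Fs ! j - {y}"
      using exchange by blast
    moreover obtain k where "k < length Fs" "Fs ! k = B''"
      using \<open>B'' \<in> Bs\<close> Fs(2) by (metis in_set_conv_nth)
    ultimately show ?thesis using key_less_iff that(2) by blast
  qed
  then have "shelling_order (generated_complex (set Fs)) Fs"
    using shelling_order_if_exchange[OF Fs(1)] assms(3) antichain Fs(2) by blast
  then show ?thesis using Fs(2) by (auto simp: shellable_def)
qed

section \<open>Bases of a U-matroid are rank jumps of maximal chains\<close>

locale umatroid =
  fixes E :: "'a set" and D :: "'a set set" and \<rho> :: "'a set \<Rightarrow> nat"
  assumes U_matroid: "U_matroid E D \<rho>"
begin

lemma finite_E: "finite E"
  using U_matroid by (simp add: U_matroid_def)

lemma D_subset: "A \<in> D \<Longrightarrow> A \<subseteq> E"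
  using U_matroid by (auto simp: U_matroid_def accessible_distributive_lattice_def)

lemma empty_in_D: "{} \<in> D"
  using U_matroid by (simp add: U_matroid_def accessible_distributive_lattice_def)

lemma E_in_D: "E \<in> D"
  using U_matroid by (simp add: U_matroid_def accessible_distributive_lattice_def)

lemma Un_in_D: "A \<in> D \<Longrightarrow> B \<in> D \<Longrightarrow> A \<union> B \<in> D"
  using U_matroid by (simp add: U_matroid_def accessible_distributive_lattice_def)

lemma Int_in_D: "A \<in> D \<Longrightarrow> B \<in> D \<Longrightarrow> A \<inter> B \<in> D"
  using U_matroid by (simp add: U_matroid_def accessible_distributive_lattice_def)

lemma rank_empty: "\<rho> {} = 0"
  using U_matroid by (simp add: U_matroid_def)

lemma rank_mono: "A \<in> D \<Longrightarrow> B \<in> D \<Longrightarrow> A \<subseteq> B \<Longrightarrow> \<rho> A \<le> \<rho> B"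
  using U_matroid by (simp add: U_matroid_def)

lemma rank_submodular: "A \<in> D \<Longrightarrow> B \<in> D \<Longrightarrow> \<rho> (A \<union> B) + \<rho> (A \<inter> B) \<le> \<rho> A + \<rho> B"
  using U_matroid by (simp add: U_matroid_def)

lemma rank_insert_le: "A \<in> D \<Longrightarrow> insert e A \<in> D \<Longrightarrow> \<rho> (insert e A) \<le> \<rho> A + 1"
  using U_matroid unfolding U_matroid_def by (metis insert_is_Un sup_commute)

lemma finite_member_D: "A \<in> D \<Longrightarrow> finite A"
  using D_subset finite_E finite_subset by blast

lemma finite_D: "finite D"
  by (rule finite_subset[of _ "Pow E"]) (auto dest: D_subset simp: finite_E)

lemma rank_insert_cases:
  assumes "A \<in> D" "insert e A \<in> D"
  shows "\<rho> (insert e A) = \<rho> A \<or> \<rho> (insert e A) = \<rho> A + 1"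
proof -
  have "\<rho> A \<le> \<rho> (insert e A)" using rank_mono[OF assms] by blast
  then show ?thesis using rank_insert_le[OF assms] by linarith
qed

lemma rank_jump_antimono:
  assumes "X \<in> D" "insert e X \<in> D" "Y \<in> D" "X \<subseteq> Y" "\<rho> (insert e Y) \<noteq> \<rho> Y"
  shows "\<rho> (insert e X) \<noteq> \<rho> X"
proof -
  have "e \<notin> Y" using assms(5) by (metis insert_absorb)
  then have "insert e X \<union> Y = insert e Y" "insert e X \<inter> Y = X" using assms(4) by auto
  then have "\<rho> (insert e Y) + \<rho> X \<le> \<rho> (insert e X) + \<rho> Y"
    using rank_submodular[OF assms(2,3)] by simp
  moreover have "\<rho> (insert e Y) = \<rho> Y + 1"
    using rank_insert_cases[of Y e] Un_in_D[OF assms(2,3)] assms(3,5) \<open>insert e X \<union> Y = insert e Y\<close>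
    by auto
  ultimately show ?thesis by simp
qed

lemma card_rank_jumps: "feasible_list D l \<Longrightarrow> card (rank_jumps \<rho> l) = \<rho> (set l)"
proof (induction l)
  case Nil
  then show ?case by (simp add: rank_empty)
next
  case (Cons e l)
  then have "set l \<in> D" "insert e (set l) \<in> D" "e \<notin> rank_jumps \<rho> l"
    using set_feasible_list[OF _ empty_in_D] rank_jumps_subset[of \<rho> l] by auto
  then show ?case
    using Cons rank_insert_cases[of "set l" e] by (auto simp: finite_rank_jumps)
qed

lemma card_Int_rank_jumps_le:
  "feasible_list D l \<Longrightarrow> A \<in> D \<Longrightarrow> card (A \<inter> rank_jumps \<rho> l) \<le> \<rho> (A \<inter> set l)"
proof (induction l)
  case Nil
  then show ?case by (simp add: rank_empty)
next
  case (Cons e l)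
  have l: "set l \<in> D" "insert e (set l) \<in> D" "e \<notin> set l" "feasible_list D l"
    using Cons.prems set_feasible_list[OF _ empty_in_D] by auto
  have D: "A \<inter> set l \<in> D" "A \<inter> insert e (set l) \<in> D"
    using Int_in_D Cons.prems(2) l by auto
  have IH: "card (A \<inter> rank_jumps \<rho> l) \<le> \<rho> (A \<inter> set l)"
    using Cons.IH Cons.prems l by blast
  have mono: "\<rho> (A \<inter> set l) \<le> \<rho> (A \<inter> insert e (set l))"
    using rank_mono[OF D] by blast
  show ?case
  proof (cases "e \<in> A \<and> \<rho> (insert e (set l)) \<noteq> \<rho> (set l)")
    case False
    then have "A \<inter> rank_jumps \<rho> (e # l) = A \<inter> rank_jumps \<rho> l" by auto
    then show ?thesis using IH mono by simp
  next
    case True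
    then have "A \<inter> insert e (set l) = insert e (A \<inter> set l)" by auto
    then have "\<rho> (A \<inter> insert e (set l)) \<noteq> \<rho> (A \<inter> set l)"
      using rank_jump_antimono[of "A \<inter> set l" e "set l"] D l True by auto
    then have "\<rho> (A \<inter> insert e (set l)) = \<rho> (A \<inter> set l) + 1"
      using rank_insert_cases[of "A \<inter> set l" e] D \<open>A \<inter> insert e (set l) = _\<close> by auto
    moreover have "A \<inter> rank_jumps \<rho> (e # l) = insert e (A \<inter> rank_jumps \<rho> l)"
      using True by auto
    moreover have "e \<notin> rank_jumps \<rho> l" using rank_jumps_subset[of \<rho> l] l(3) by blast
    ultimately show ?thesis using IH by (simp add: finite_rank_jumps)
  qed
qed

definition maximal_chains :: "'a list set" where
  "maximal_chains = {z. feasible_list D z \<and> set z = E}"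

lemma maximal_chainsD:
  assumes "z \<in> maximal_chains"
  shows "feasible_list D z" "set z = E" "distinct z"
  using assms feasible_list_distinct by (auto simp: maximal_chains_def)

lemma finite_maximal_chains: "finite maximal_chains"
proof -
  have "length z = card E" if "z \<in> maximal_chains" for z
    using maximal_chainsD[OF that] distinct_card by metis
  then have "maximal_chains \<subseteq> {z. set z \<subseteq> E \<and> length z \<le> card E}"
    using maximal_chainsD(2) by auto
  then show ?thesis using finite_lists_length_le[OF finite_E] finite_subset by blast
qed

lemma maximal_chains_same_suffix_set:
  assumes "u @ l \<in> maximal_chains" "u @ l' \<in> maximal_chains"
  shows "set l = set l'"
proof -
  have "set l = E - set u" "set l' = E - set u"
    using maximal_chainsD[OF assms(1)] maximal_chainsD[OF assms(2)] by auto
  then show ?thesis by simp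
qed

lemma rank_jumps_maximal_chains_subset_eq:
  assumes "z \<in> maximal_chains" "z' \<in> maximal_chains" "rank_jumps \<rho> z \<subseteq> rank_jumps \<rho> z'"
  shows "rank_jumps \<rho> z = rank_jumps \<rho> z'"
proof -
  have "card (rank_jumps \<rho> z) = card (rank_jumps \<rho> z')"
    using card_rank_jumps maximal_chainsD assms(1,2) by metis
  then show ?thesis using card_subset_eq[OF finite_rank_jumps assms(3)] by simp
qed

lemma indicator_rank_jumps_in_base_polyhedron:
  assumes "z \<in> maximal_chains"
  shows "restrict (indicator (rank_jumps \<rho> z)) E \<in> base_polyhedron E D \<rho>"
proof -
  have z: "feasible_list D z" "set z = E" using assms by (auto simp: maximal_chains_def)
  have "sum (restrict (indicator (rank_jumps \<rho> z)) E) A \<le> real (\<rho> A)" if "A \<in> D" for A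
  proof -
    have "A \<inter> set z = A" using D_subset[OF that] z(2) by blast
    then show ?thesis
      using card_Int_rank_jumps_le[OF z(1) that] sum_restrict_indicator[OF finite_member_D D_subset, OF that that]
      by simp
  qed
  moreover have "E \<inter> rank_jumps \<rho> z = rank_jumps \<rho> z" using rank_jumps_subset[of \<rho> z] z(2) by blast
  ultimately show ?thesis
    using card_rank_jumps[OF z(1)] z(2) sum_restrict_indicator[OF finite_E subset_refl]
    by (simp add: base_polyhedron_def)
qed

lemma sum_indicator_rank_jumps_suffix:
  assumes "z \<in> maximal_chains" "z = u @ l"
  shows "sum (restrict (indicator (rank_jumps \<rho> z)) E) (set l) = real (\<rho> (set l))"
proof -
  have z: "feasible_list D z" "set z = E" using assms(1) by (auto simp: maximal_chains_def)
  have "set l \<inter> rank_jumps \<rho> z = rank_jumps \<rho> l"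
    using rank_jumps_append_inter feasible_list_distinct[OF z(1)] assms(2) by blast
  moreover have "card (rank_jumps \<rho> l) = \<rho> (set l)"
    using card_rank_jumps feasible_list_appendD z(1) assms(2) by blast
  moreover have "set l \<subseteq> E" using z(2) assms(2) by auto
  ultimately show ?thesis using sum_restrict_indicator[of "set l" E] by simp
qed

lemma vertex_indicator_rank_jumps:
  assumes z: "z \<in> maximal_chains"
  shows "is_vertex (base_polyhedron E D \<rho>) (restrict (indicator (rank_jumps \<rho> z)) E)"
  unfolding is_vertex_def
proof (intro conjI notI)
  let ?x = "restrict (indicator (rank_jumps \<rho> z)) E"
  show "?x \<in> base_polyhedron E D \<rho>" using indicator_rank_jumps_in_base_polyhedron[OF z] .
  assume "\<exists>y\<in>base_polyhedron E D \<rho>. \<exists>w\<in>base_polyhedron E D \<rho>. y \<noteq> w \<and>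
    (\<exists>t. 0 < t \<and> t < 1 \<and> ?x = (\<lambda>e. t * y e + (1 - t) * w e))"
  then obtain y w t where yw: "y \<in> base_polyhedron E D \<rho>" "w \<in> base_polyhedron E D \<rho>" "y \<noteq> w"
    and t: "0 < t" "t < 1" and x: "?x = (\<lambda>e. t * y e + (1 - t) * w e)"
    by blast
  have z': "feasible_list D z" "set z = E" using z by (auto simp: maximal_chains_def)
  have "sum y (set l) = real (\<rho> (set l)) \<and> sum w (set l) = real (\<rho> (set l))" if "z = u @ l" for u l
  proof -
    have "set l \<in> D" using set_feasible_list feasible_list_appendD z'(1) that empty_in_D by blast
    then have "sum y (set l) \<le> \<rho> (set l)" "sum w (set l) \<le> \<rho> (set l)"
      using yw by (auto simp: base_polyhedron_def)
    moreover have "t * sum y (set l) + (1 - t) * sum w (set l) = \<rho> (set l)"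
      using sum_indicator_rank_jumps_suffix[OF z that]
      by (simp add: x sum.distrib sum_distrib_left)
    ultimately show ?thesis using convex_combination_eq_upper_bound t by blast
  qed
  then have "y = w"
    using eq_if_suffix_sums_eq[of y E w z] yw feasible_list_distinct[OF z'(1)] z'(2)
    by (auto simp: base_polyhedron_def)
  then show False using yw(3) by contradiction
qed

definition tight_sets :: "('a \<Rightarrow> real) \<Rightarrow> 'a set set" where
  "tight_sets x = {A \<in> D. sum x A = real (\<rho> A)}"

lemma tight_sets_subset: "tight_sets x \<subseteq> D"
  by (auto simp: tight_sets_def)

lemma empty_in_tight_sets: "{} \<in> tight_sets x"
  by (simp add: tight_sets_def empty_in_D rank_empty)

lemma E_in_tight_sets: "x \<in> base_polyhedron E D \<rho> \<Longrightarrow> E \<in> tight_sets x"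
  by (simp add: tight_sets_def base_polyhedron_def E_in_D)

lemma tight_sets_Un_Int:
  assumes x: "x \<in> base_polyhedron E D \<rho>" and A: "A \<in> tight_sets x" and B: "B \<in> tight_sets x"
  shows "A \<union> B \<in> tight_sets x" "A \<inter> B \<in> tight_sets x"
proof -
  have D: "A \<in> D" "B \<in> D" "A \<union> B \<in> D" "A \<inter> B \<in> D"
    using A B Un_in_D Int_in_D by (auto simp: tight_sets_def)
  have "sum x (A \<union> B) + sum x (A \<inter> B) = sum x A + sum x B"
    using sum.union_inter[OF finite_member_D finite_member_D] D by blast
  moreover have "real (\<rho> (A \<union> B)) + real (\<rho> (A \<inter> B)) \<le> real (\<rho> A) + real (\<rho> B)"
    using rank_submodular[OF D(1,2)] by linarith
  moreover have "sum x (A \<union> B) \<le> real (\<rho> (A \<union> B))" "sum x (A \<inter> B) \<le> real (\<rho> (A \<inter> B))"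
    using x D by (auto simp: base_polyhedron_def)
  moreover have "sum x A = real (\<rho> A)" "sum x B = real (\<rho> B)"
    using A B by (auto simp: tight_sets_def)
  ultimately show "A \<union> B \<in> tight_sets x" "A \<inter> B \<in> tight_sets x"
    using D by (auto simp: tight_sets_def)
qed

lemma slack_bound:
  assumes "x \<in> base_polyhedron E D \<rho>"
  obtains \<epsilon> where "\<epsilon> > 0" "\<And>B. B \<in> D \<Longrightarrow> B \<notin> tight_sets x \<Longrightarrow> sum x B + \<epsilon> \<le> real (\<rho> B)"
proof
  let ?slacks = "insert 1 ((\<lambda>B. real (\<rho> B) - sum x B) ` (D - tight_sets x))"
  have "finite ?slacks" using finite_D by simp
  moreover have "s > 0" if "s \<in> ?slacks" for s
    using that assms by (force simp: tight_sets_def base_polyhedron_def)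
  ultimately show "Min ?slacks > 0" by simp
  show "sum x B + Min ?slacks \<le> real (\<rho> B)" if "B \<in> D" "B \<notin> tight_sets x" for B
  proof -
    have "Min ?slacks \<le> real (\<rho> B) - sum x B"
      using that \<open>finite ?slacks\<close> by (intro Min_le) auto
    then show ?thesis by linarith
  qed
qed

lemma shift_in_base_polyhedron:
  assumes x: "x \<in> base_polyhedron E D \<rho>"
    and tight: "\<And>B. B \<in> tight_sets x \<Longrightarrow> sum c B = 0"
    and slack: "\<And>B. B \<in> D \<Longrightarrow> B \<notin> tight_sets x \<Longrightarrow> sum x B + sum c B \<le> real (\<rho> B)"
  shows "restrict (\<lambda>e. x e + c e) E \<in> base_polyhedron E D \<rho>"
proof -
  have sum_shift: "sum (restrict (\<lambda>e. x e + c e) E) B = sum x B + sum c B" if "B \<subseteq> E" for B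
    using that by (simp add: sum.distrib[symmetric] subset_iff cong: sum.cong)
  have "sum (restrict (\<lambda>e. x e + c e) E) B \<le> real (\<rho> B)" if B: "B \<in> D" for B
  proof (cases "B \<in> tight_sets x")
    case True
    then show ?thesis using sum_shift[OF D_subset[OF B]] tight by (simp add: tight_sets_def)
  next
    case False
    then show ?thesis using sum_shift[OF D_subset[OF B]] slack B by simp
  qed
  moreover have "sum (restrict (\<lambda>e. x e + c e) E) E = real (\<rho> E)"
    using sum_shift[of E] tight[OF E_in_tight_sets[OF x]] x by (simp add: base_polyhedron_def)
  ultimately show ?thesis by (simp add: base_polyhedron_def)
qed

lemma vertex_tight_sets_separate:
  assumes vertex: "is_vertex (base_polyhedron E D \<rho>) x" and "a \<in> E" "a \<noteq> b"
  shows "\<exists>B\<in>tight_sets x. (a \<in> B) \<noteq> (b \<in> B)"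
proof (rule ccontr)
  assume "\<not> ?thesis"
  then have not_separated: "a \<in> B \<longleftrightarrow> b \<in> B" if "B \<in> tight_sets x" for B
    using that by auto
  have x: "x \<in> base_polyhedron E D \<rho>" using vertex by (simp add: is_vertex_def)
  obtain \<epsilon> where \<epsilon>: "\<epsilon> > 0" "\<And>B. B \<in> D \<Longrightarrow> B \<notin> tight_sets x \<Longrightarrow> sum x B + \<epsilon> \<le> real (\<rho> B)"
    using slack_bound[OF x] by blast
  define d where "d = (\<lambda>e. (if e = a then \<epsilon> else 0) - (if e = b then \<epsilon> else 0))"
  have sum_d: "sum d B = (if a \<in> B then \<epsilon> else 0) - (if b \<in> B then \<epsilon> else 0)" if "B \<in> D" for B
    using finite_member_D[OF that] by (simp add: d_def sum_subtractf)
  have "sum d B \<le> \<epsilon>" "- sum d B \<le> \<epsilon>" if "B \<in> D" for B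
    using sum_d[OF that] \<epsilon>(1) by auto
  then have slack: "sum x B + sum d B \<le> real (\<rho> B)" "sum x B + sum (\<lambda>e. - d e) B \<le> real (\<rho> B)"
    if "B \<in> D" "B \<notin> tight_sets x" for B
    using \<epsilon>(2)[OF that] that(1) unfolding sum_negf by fastforce+
  have tight: "sum d B = 0" "sum (\<lambda>e. - d e) B = 0" if "B \<in> tight_sets x" for B
    using sum_d not_separated[OF that] that by (auto simp: tight_sets_def sum_negf)
  have "restrict (\<lambda>e. x e + d e) E \<in> base_polyhedron E D \<rho>"
    using tight(1) slack(1) by (rule shift_in_base_polyhedron[OF x])
  moreover have "restrict (\<lambda>e. x e + - d e) E \<in> base_polyhedron E D \<rho>"
    using tight(2) slack(2) by (rule shift_in_base_polyhedron[OF x])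
  moreover have "x \<in> extensional E" using x by (simp add: base_polyhedron_def)
  moreover have "d a \<noteq> 0" using \<open>a \<noteq> b\<close> \<epsilon>(1) by (simp add: d_def)
  ultimately have "\<not> is_vertex (base_polyhedron E D \<rho>) x"
    using not_vertex_if_symmetric_shift[where c = d] \<open>a \<in> E\<close> by simp
  then show False using vertex by contradiction
qed

lemma support_eq_rank_jumps:
  "feasible_list (tight_sets x) l \<Longrightarrow> {e \<in> set l. x e \<noteq> 0} = rank_jumps \<rho> l"
proof (induction l)
  case Nil
  then show ?case by simp
next
  case (Cons e l)
  have l: "feasible_list (tight_sets x) l" "set l \<in> tight_sets x" "insert e (set l) \<in> tight_sets x"
    "e \<notin> set l"
    using Cons.prems set_feasible_list[of "tight_sets x" l, OF _ empty_in_tight_sets] by auto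
  then have x_e: "x e = real (\<rho> (insert e (set l))) - real (\<rho> (set l))"
    by (simp add: tight_sets_def)
  have IH: "{e' \<in> set l. x e' \<noteq> 0} = rank_jumps \<rho> l" by (rule Cons.IH[OF l(1)])
  show ?case
  proof (cases "\<rho> (insert e (set l)) = \<rho> (set l)")
    case True
    then have "x e = 0" using x_e by simp
    then show ?thesis using True IH by auto
  next
    case False
    then have "\<rho> (insert e (set l)) = \<rho> (set l) + 1"
      using rank_insert_cases l(2,3) tight_sets_subset by blast
    then have "x e = 1" using x_e by simp
    then have "{e' \<in> set (e # l). x e' \<noteq> 0} = insert e {e' \<in> set l. x e' \<noteq> 0}" by auto
    then show ?thesis using False IH by simp
  qed
qed

lemma vertex_support_eq_rank_jumps:
  assumes vertex: "is_vertex (base_polyhedron E D \<rho>) x"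
  shows "\<exists>z\<in>maximal_chains. support E x = rank_jumps \<rho> z"
proof -
  have x: "x \<in> base_polyhedron E D \<rho>" using vertex by (simp add: is_vertex_def)
  have finite: "finite (tight_sets x)" using finite_subset[OF tight_sets_subset finite_D] .
  have separated: "\<exists>B\<in>tight_sets x. (a \<in> B) \<noteq> (b \<in> B)"
    if "a \<in> \<Union>(tight_sets x)" "a \<noteq> b" for a b
  proof -
    have "a \<in> E" using that(1) tight_sets_subset D_subset by blast
    then show ?thesis using vertex_tight_sets_separate[OF vertex _ that(2)] by blast
  qed
  have "\<exists>e\<in>A. A - {e} \<in> tight_sets x" if "A \<in> tight_sets x" "A \<noteq> {}" for A
    using accessible_if_points_separated[OF finite empty_in_tight_sets
        tight_sets_Un_Int(1)[OF x] tight_sets_Un_Int(2)[OF x] separated that] .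
  then obtain z where z: "feasible_list (tight_sets x) z" "set z = E"
    using feasible_list_exists[OF empty_in_tight_sets _ E_in_tight_sets[OF x] finite_E] by blast
  then have "z \<in> maximal_chains"
    using feasible_list_mono[OF z(1) tight_sets_subset] by (simp add: maximal_chains_def)
  moreover have "support E x = rank_jumps \<rho> z"
    using support_eq_rank_jumps[OF z(1)] z(2) by (simp add: support_def)
  ultimately show ?thesis by blast
qed

lemma U_bases_eq: "U_bases E D \<rho> = rank_jumps \<rho> ` maximal_chains"
proof -
  have "support E (restrict (indicator (rank_jumps \<rho> z)) E) = rank_jumps \<rho> z"
    if "z \<in> maximal_chains" for z
    using that rank_jumps_subset[of \<rho> z] by (auto simp: support_def maximal_chains_def indicator_def)
  then show ?thesis
    using vertex_support_eq_rank_jumps vertex_indicator_rank_jumps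
    unfolding U_bases_def by blast
qed

section \<open>Exchange between maximal chains\<close>

lemma feasible_list_remove1:
  "feasible_list D L \<Longrightarrow> set L - {y} \<in> D \<Longrightarrow> feasible_list D (remove1 y L)"
proof (induction L)
  case Nil
  then show ?case by simp
next
  case (Cons e L)
  show ?case
  proof (cases "e = y")
    case True
    then show ?thesis using Cons.prems by simp
  next
    case False
    have L: "feasible_list D L" "distinct L" "set L \<in> D"
      using Cons.prems(1) feasible_list_distinct set_feasible_list[OF _ empty_in_D] by auto
    have "set L - {y} = set L \<inter> (set (e # L) - {y})" using Cons.prems(1) by auto
    then have "set L - {y} \<in> D" using Int_in_D L(3) Cons.prems(2) by auto
    then have "feasible_list D (remove1 y L)" using Cons.IH L(1) by blast
    moreover have "set (e # remove1 y L) = set (e # L) - {y}"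
      using L(2) False by (auto simp: set_remove1_eq)
    ultimately show ?thesis using Cons.prems L(2) False by (simp add: set_remove1_eq)
  qed
qed

lemma rank_jumps_remove1:
  "feasible_list D L \<Longrightarrow> y \<in> set L \<Longrightarrow> set L - {y} \<in> D \<Longrightarrow>
    rank_jumps \<rho> L - {y} \<subseteq> rank_jumps \<rho> (remove1 y L)"
proof (induction L)
  case Nil
  then show ?case by simp
next
  case (Cons e L)
  show ?case
  proof (cases "e = y")
    case True
    then show ?thesis by auto
  next
    case False
    have L: "feasible_list D L" "distinct L" "set L \<in> D" "y \<in> set L"
      using Cons.prems False feasible_list_distinct set_feasible_list[OF _ empty_in_D] by auto
    have "set L - {y} = set L \<inter> (set (e # L) - {y})" using Cons.prems(1) by auto
    then have Ly: "set L - {y} \<in> D" using Int_in_D L(3) Cons.prems(3) by auto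
    have IH: "rank_jumps \<rho> L - {y} \<subseteq> rank_jumps \<rho> (remove1 y L)"
      using Cons.IH L(1,4) Ly by blast
    have "insert e (set L - {y}) \<in> D" using Cons.prems(3) False by (simp add: insert_Diff_if)
    then have "\<rho> (insert e (set L - {y})) \<noteq> \<rho> (set L - {y})" if "\<rho> (insert e (set L)) \<noteq> \<rho> (set L)"
      using rank_jump_antimono[OF Ly _ L(3) _ that] by blast
    then show ?thesis using IH False L(2) by (auto simp: set_remove1_eq)
  qed
qed

lemma move_to_front_maximal_chain:
  assumes UL: "U @ L \<in> maximal_chains" and UyV: "U @ y # V \<in> maximal_chains"
  shows "U @ y # remove1 y L \<in> maximal_chains"
proof -
  have L: "set L = set (y # V)" using maximal_chains_same_suffix_set[OF UL UyV] .
  have feasible: "feasible_list D L" "feasible_list D (y # V)"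
    using maximal_chainsD(1) UL UyV feasible_list_appendD by blast+
  have "distinct L" using maximal_chainsD(3)[OF UL] by simp
  then have set_R: "set (remove1 y L) = set V"
    using L feasible(2) by (simp add: set_remove1_eq)
  have "set V \<in> D" "set L \<in> D"
    using feasible set_feasible_list[OF _ empty_in_D] by auto
  then have "feasible_list D (remove1 y L)"
    using feasible_list_remove1[OF feasible(1)] L feasible(2) by simp
  then have "feasible_list D (y # remove1 y L)"
    using set_R L feasible(2) \<open>set L \<in> D\<close> by simp
  then have "feasible_list D (U @ y # remove1 y L)"
    using feasible_list_append_cong[OF maximal_chainsD(1)[OF UL]] set_R L by simp
  moreover have "set (U @ y # remove1 y L) = E"
    using maximal_chainsD(2)[OF UL] set_R L by auto
  ultimately show ?thesis by (simp add: maximal_chains_def)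
qed

lemma rank_jumps_move_to_front_subset:
  assumes UL: "U @ L \<in> maximal_chains" and UyV: "U @ y # V \<in> maximal_chains"
  shows "rank_jumps \<rho> (U @ L) - {y} \<subseteq> rank_jumps \<rho> (U @ y # remove1 y L)"
proof
  let ?R = "remove1 y L"
  have distinct: "distinct (U @ L)" "distinct (U @ y # V)" "distinct (U @ y # ?R)"
    using maximal_chainsD(3) UL UyV move_to_front_maximal_chain[OF UL UyV] by blast+
  have L: "set L = set (y # V)" using maximal_chains_same_suffix_set[OF UL UyV] .
  have "feasible_list D V"
    using maximal_chainsD(1)[OF UyV] feasible_list_appendD[of D "U @ [y]" V] by simp
  then have feasible_L: "feasible_list D L" "set L - {y} \<in> D"
    using maximal_chainsD(1)[OF UL] feasible_list_appendD set_feasible_list[OF _ empty_in_D] L distinct(2)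
    by auto
  fix e assume e: "e \<in> rank_jumps \<rho> (U @ L) - {y}"
  show "e \<in> rank_jumps \<rho> (U @ y # ?R)"
  proof (cases "e \<in> set L")
    case True
    then have "e \<in> rank_jumps \<rho> L - {y}"
      using e rank_jumps_append_inter[OF distinct(1)] by blast
    then have "e \<in> rank_jumps \<rho> ?R"
      using rank_jumps_remove1[OF feasible_L(1) _ feasible_L(2)] L by auto
    then have "e \<in> rank_jumps \<rho> (y # ?R)" by simp
    then show ?thesis using rank_jumps_append_inter[OF distinct(3)] by blast
  next
    case False
    moreover have "set (y # ?R) = set L" using distinct L by (auto simp: set_remove1_eq)
    ultimately show ?thesis
      using e rank_jumps_append_diff_cong[of L "y # ?R" \<rho> U] by blast
  qed
qed

lemma rank_jumps_move_to_front_mem: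
  assumes UL: "U @ L \<in> maximal_chains" and UyV: "U @ y # V \<in> maximal_chains"
    and y: "y \<in> rank_jumps \<rho> (U @ y # V)"
  shows "y \<in> rank_jumps \<rho> (U @ y # remove1 y L)"
proof -
  let ?R = "remove1 y L"
  have distinct: "distinct (U @ y # V)" "distinct (U @ y # ?R)" "distinct (U @ L)"
    using maximal_chainsD(3) UL UyV move_to_front_maximal_chain[OF UL UyV] by blast+
  have R: "set ?R = set V" "y \<notin> set V"
    using distinct maximal_chains_same_suffix_set[OF UL UyV] by (auto simp: set_remove1_eq)
  have "y \<in> set (y # V) \<inter> rank_jumps \<rho> (U @ y # V)" using y by simp
  then have "y \<in> rank_jumps \<rho> (y # V)"
    unfolding rank_jumps_append_inter[OF distinct(1)] .
  then have "\<rho> (insert y (set V)) \<noteq> \<rho> (set V)"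
    using mem_rank_jumps_Cons[OF R(2)] by blast
  then have "y \<in> rank_jumps \<rho> (y # ?R)" using R(1) by simp
  then have "y \<in> set (y # ?R) \<inter> rank_jumps \<rho> (U @ y # ?R)"
    unfolding rank_jumps_append_inter[OF distinct(2)] .
  then show ?thesis by simp
qed

end

locale indexed_umatroid = umatroid +
  fixes idx :: "'a \<Rightarrow> 'b::linorder"
  assumes inj_idx: "inj_on idx E"
begin

definition chain_key :: "'a set \<Rightarrow> 'b list" where
  "chain_key B = Min {map idx z | z. z \<in> maximal_chains \<and> rank_jumps \<rho> z = B}"

lemma chain_key_le: "z \<in> maximal_chains \<Longrightarrow> chain_key (rank_jumps \<rho> z) \<le> map idx z"
  unfolding chain_key_def using finite_maximal_chains by (intro Min_le) auto

lemma chain_key_attained: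
  assumes "B \<in> rank_jumps \<rho> ` maximal_chains"
  obtains z where "z \<in> maximal_chains" "rank_jumps \<rho> z = B" "map idx z = chain_key B"
proof -
  let ?M = "{map idx z | z. z \<in> maximal_chains \<and> rank_jumps \<rho> z = B}"
  have "Min ?M \<in> ?M" using finite_maximal_chains assms by (intro Min_in) auto
  then obtain z where "z \<in> maximal_chains" "rank_jumps \<rho> z = B" "map idx z = Min ?M" by auto
  then show ?thesis using that by (simp add: chain_key_def)
qed

lemma inj_on_chain_key: "inj_on chain_key (rank_jumps \<rho> ` maximal_chains)"
proof
  fix B B' assume B: "B \<in> rank_jumps \<rho> ` maximal_chains" and B': "B' \<in> rank_jumps \<rho> ` maximal_chains"
    and eq: "chain_key B = chain_key B'"
  obtain z where z: "z \<in> maximal_chains" "rank_jumps \<rho> z = B" "map idx z = chain_key B"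
    using chain_key_attained[OF B] .
  obtain z' where z': "z' \<in> maximal_chains" "rank_jumps \<rho> z' = B'" "map idx z' = chain_key B'"
    using chain_key_attained[OF B'] .
  have "inj_on idx (set z \<union> set z')" using inj_idx maximal_chainsD(2) z(1) z'(1) by simp
  then have "z = z'" using z(3) z'(3) eq inj_on_map_eq_map by metis
  then show "B = B'" using z(2) z'(2) by simp
qed

lemma chain_key_exchange:
  assumes B: "B \<in> rank_jumps \<rho> ` maximal_chains" and B': "B' \<in> rank_jumps \<rho> ` maximal_chains"
    and less: "chain_key B < chain_key B'"
  shows "\<exists>B''\<in>rank_jumps \<rho> ` maximal_chains. chain_key B'' < chain_key B' \<and>
    (\<exists>y\<in>B' - B. B'' \<inter> B' = B' - {y})"
proof -
  obtain z where z: "z \<in> maximal_chains" "rank_jumps \<rho> z = B" "map idx z = chain_key B"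
    using chain_key_attained[OF B] .
  obtain z' where z': "z' \<in> maximal_chains" "rank_jumps \<rho> z' = B'" "map idx z' = chain_key B'"
    using chain_key_attained[OF B'] .
  have "length z = length z'"
    using maximal_chainsD[OF z(1)] maximal_chainsD[OF z'(1)] distinct_card by metis
  moreover have "inj_on idx (set z \<union> set z')" using inj_idx maximal_chainsD(2) z(1) z'(1) by simp
  ultimately obtain U y V x W where zU: "z = U @ y # V" and z'U: "z' = U @ x # W" and "idx y < idx x"
    using map_less_map_common_prefix[of idx z z'] less z(3) z'(3) by metis
  define z'' where "z'' = U @ y # remove1 y (x # W)"
  have chain: "z'' \<in> maximal_chains"
    unfolding z''_def using move_to_front_maximal_chain z(1) z'(1) zU z'U by blast
  have "chain_key (rank_jumps \<rho> z'') \<le> map idx z''" using chain_key_le[OF chain] .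
  also have "\<dots> < map idx z'"
    unfolding z''_def z'U using append_Cons_less[OF \<open>idx y < idx x\<close>] by simp
  finally have key_less: "chain_key (rank_jumps \<rho> z'') < chain_key B'" using z'(3) by simp
  have "B' - {y} \<subseteq> rank_jumps \<rho> z''"
    unfolding z''_def using rank_jumps_move_to_front_subset z(1) z'(1) zU z'U z'(2) by blast
  moreover have "\<not> B' \<subseteq> rank_jumps \<rho> z''"
    using rank_jumps_maximal_chains_subset_eq[OF z'(1) chain] key_less z'(2) by auto
  ultimately have y: "y \<in> B'" "y \<notin> rank_jumps \<rho> z''" "rank_jumps \<rho> z'' \<inter> B' = B' - {y}"
    by blast+
  moreover have "y \<notin> B"
    using y(2) rank_jumps_move_to_front_mem z(1) z'(1) zU z'U z(2) unfolding z''_def by blast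
  ultimately show ?thesis using chain key_less by blast
qed

end

theorem theorem5p1:
  fixes E :: "'a set" and D :: "'a set set" and \<rho> :: "'a set \<Rightarrow> nat"
  assumes "U_matroid E D \<rho>"
  shows "shellable (pseudo_independence_complex E D \<rho>)"
proof -
  interpret umatroid E D \<rho> using assms by (rule umatroid.intro)
  obtain idx :: "'a \<Rightarrow> nat" where "inj_on idx E"
    using finite_imp_inj_to_nat_seg[OF finite_E] by blast
  then interpret indexed_umatroid E D \<rho> idx
    by (intro indexed_umatroid.intro indexed_umatroid_axioms.intro umatroid.intro assms)
  have "shellable (generated_complex (rank_jumps \<rho> ` maximal_chains))"
  proof (rule shellable_if_key_exchange)
    show "finite (rank_jumps \<rho> ` maximal_chains)" using finite_maximal_chains by simp
    show "inj_on chain_key (rank_jumps \<rho> ` maximal_chains)" by (rule inj_on_chain_key)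
    show "finite B" if "B \<in> rank_jumps \<rho> ` maximal_chains" for B
      using that finite_rank_jumps by blast
    show "B = B'" if "B \<in> rank_jumps \<rho> ` maximal_chains" "B' \<in> rank_jumps \<rho> ` maximal_chains" "B \<subseteq> B'"
      for B B'
      using that rank_jumps_maximal_chains_subset_eq by blast
  qed (rule chain_key_exchange)
  then show ?thesis by (simp add: pseudo_independence_complex_def U_bases_eq)
qed

end
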